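(* Let $\mathcal{Q}\subseteq\Delta_{N\times M}$ be a nonempty compact convex set. Then strong duality holds between the problem $$\text{(P)}\quad \max_{p,\lambda\in\mathbb{R}^N,\ V\in\mathbb{R}^{N\times M}} \ \sum_{n=1}^N \lambda_n - \delta^\ast(V\mid\mathcal{Q})\ \ \text{s.t.}\ \sum_{n=1}^N p_n \exp\!\left(\frac{\lambda_n - V_{nm}}{p_n}\right) \le 1\ \forall m,\ p\ge 0,\ \sum_n p_n=1,$$ and the problem $$\text{(D)}\quad \min_{v\in\mathbb{R}^M,\ Q\in\mathcal{Q}} \ \log\sum_{m=1}^M \exp(v_m) + \max_{n=1,\dots,N}\left\{\sum_{m=1}^M Q_{nm}\left(\log Q_{nm}-v_m\right)\right\},$$ i.e. the optimal values of (P) and (D) coincide. Consequently, the robust capacity $\sup_{p\in\Delta_N}\inf_{Q\in\mathcal{Q}}I(p,Q)$ equals the optimal value of (D).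
   Context: $\Delta_N$ is the probability simplex in $\mathbb{R}^N$; $\Delta_{N\times M}$ is the set of $N\times M$ nonnegative matrices with each row summing to $1$. $I(p,Q)=\sum_{n,m}p_nQ_{nm}\log\frac{Q_{nm}}{\sum_l p_lQ_{lm}}$ (terms with $p_nQ_{nm}=0$ are zero). $\delta^\ast(V\mid\mathcal{Q})=\sup_{Q\in\mathcal{Q}}\sum_{n,m}V_{nm}Q_{nm}$. Convention $0\log 0=0$. The term $p_n\exp((\lambda_n-V_{nm})/p_n)$ at $p_n=0$ equals $0$ if $\lambda_n\le V_{nm}$ and $+\infty$ otherwise. *)

theory Defs
  imports "HOL-Analysis.Analysis" "HOL-Library.Extended_Real"
begin

text \<open>Indices n range over the finite type 'n (size N), m over 'm (size M).
  Vectors in R^N are real^'n, N x M matrices are real^'m^'n with entry Q$n$m.\<close>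

definition prob_simplex :: "(real^'n) set" where
  "prob_simplex = {p. (\<forall>n. p$n \<ge> 0) \<and> (\<Sum>n\<in>UNIV. p$n) = 1}"

definition stoch_matrices :: "(real^'m^'n) set" where
  "stoch_matrices = {Q. (\<forall>n m. Q$n$m \<ge> 0) \<and> (\<forall>n. (\<Sum>m\<in>UNIV. Q$n$m) = 1)}"

definition mutual_info :: "real^'n \<Rightarrow> real^'m^'n \<Rightarrow> real" where
  "mutual_info p Q = (\<Sum>n\<in>UNIV. \<Sum>m\<in>UNIV.
     (if p$n * Q$n$m = 0 then 0
      else p$n * Q$n$m * ln (Q$n$m / (\<Sum>l\<in>UNIV. p$l * Q$l$m))))"

definition support_fun :: "real^'m^'n \<Rightarrow> (real^'m^'n) set \<Rightarrow> ereal" where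
  "support_fun V \<Q> = (SUP Q\<in>\<Q>. ereal (\<Sum>n\<in>UNIV. \<Sum>m\<in>UNIV. V$n$m * Q$n$m))"

definition persp_exp :: "real \<Rightarrow> real \<Rightarrow> real \<Rightarrow> ereal" where
  "persp_exp p lam v =
     (if p > 0 then ereal (p * exp ((lam - v) / p))
      else if lam \<le> v then 0 else \<infinity>)"

definition primal_feasible :: "real^'n \<Rightarrow> real^'n \<Rightarrow> real^'m^'n \<Rightarrow> bool" where
  "primal_feasible p lam V \<longleftrightarrow> p \<in> prob_simplex \<and>
     (\<forall>m. (\<Sum>n\<in>UNIV. persp_exp (p$n) (lam$n) (V$n$m)) \<le> 1)"

definition primal_value :: "(real^'m^'n) set \<Rightarrow> ereal" where
  "primal_value \<Q> = (SUP (p, lam, V) \<in> {(p, lam, V). primal_feasible p lam V}.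
      ereal (\<Sum>n\<in>UNIV. lam$n) - support_fun V \<Q>)"

definition xlogx :: "real \<Rightarrow> real" where
  "xlogx x = (if x = 0 then 0 else x * ln x)"

definition dual_obj :: "real^'m \<Rightarrow> real^'m^'n \<Rightarrow> real" where
  "dual_obj v Q = ln (\<Sum>m\<in>UNIV. exp (v$m)) +
     Max (range (\<lambda>n. \<Sum>m\<in>UNIV. xlogx (Q$n$m) - Q$n$m * v$m))"

definition dual_value :: "(real^'m^'n) set \<Rightarrow> ereal" where
  "dual_value \<Q> = (INF (v, Q) \<in> UNIV \<times> \<Q>. ereal (dual_obj v Q))"

definition robust_capacity :: "(real^'m^'n) set \<Rightarrow> ereal" where
  "robust_capacity \<Q> = (SUP p\<in>prob_simplex. INF Q\<in>\<Q>. ereal (mutual_info p Q))"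

end

theory Submission
  imports Defs
begin

text \<open>Write P, D and R for the primal value, the dual value and the robust capacity.
  P \<le> R: a Fenchel-Young inequality between the perspective of exp and relative entropy bounds
  every primal objective value at p by I(p,Q), for each Q in the uncertainty set.
  R \<le> D: by Gibbs' inequality, I(p,Q) is at most the p-average of the relative entropies of the
  rows of Q against the softmax of v, which is at most the dual objective at (v,Q).
  D \<le> P rests on two minimax theorems, both proved with separating hyperplanes: a finite-game
  minimax theorem over the simplex of inputs gives an input p with I(p,Q) \<ge> D for all Q, and for
  this p a minimax theorem for the pairing V \<bullet> Q over the compact convex uncertainty set gives a
  channel Q0 such that I(p,Q0) - \<epsilon> is attained at primal feasible points, namely at an
  explicitly smoothed dual variable.\<close>

section \<open>Elementary inequalities\<close>

lemma xlogx_eq: "xlogx x = x * ln x"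
  by (simp add: xlogx_def)

lemma mult_ln_le_xlogx:
  fixes x z :: real
  assumes "0 \<le> x" "0 < z"
  shows "x * ln z \<le> xlogx x + z - x"
proof (cases "x = 0")
  case False
  with assms have "0 < x" by simp
  with assms have "ln z - ln x \<le> z / x - 1"
    using ln_le_minus_one[of "z / x"] by (simp add: ln_div)
  with \<open>0 < x\<close> have "x * (ln z - ln x) \<le> x * (z / x - 1)"
    by (simp add: mult_left_mono)
  with \<open>0 < x\<close> show ?thesis by (simp add: xlogx_def algebra_simps)
qed (use assms in \<open>simp add: xlogx_def\<close>)

lemma convex_on_xlogx_minus_mult_ln:
  "convex_on ({0..} \<times> {0<..}) (\<lambda>(x, y). xlogx x - x * ln y)"
proof (rule convex_onI)
  show "convex ({0..} \<times> {0<..} :: (real \<times> real) set)"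
    by (intro convex_Times convex_real_interval)
next
  fix t :: real and a b :: "real \<times> real"
  assume t: "0 < t" "t < 1" and ab: "a \<in> {0..} \<times> {0<..}" "b \<in> {0..} \<times> {0<..}"
  obtain x1 y1 x2 y2 where a: "a = (x1, y1)" and b: "b = (x2, y2)"
    and pos: "0 \<le> x1" "0 < y1" "0 \<le> x2" "0 < y2"
    using ab by auto
  define X where "X = (1 - t) * x1 + t * x2"
  define Y where "Y = (1 - t) * y1 + t * y2"
  have "0 \<le> X" using pos t unfolding X_def by simp
  have "0 < Y" using pos t unfolding Y_def by (simp add: add_pos_pos)
  \<comment> \<open>the function is the supremum over k > 0 of the affine functions x ln k + x - k y,
    attained at k = x / y\<close>
  have affine_le: "x * ln k + x - k * y \<le> xlogx x - x * ln y" if "0 \<le> x" "0 < y" "0 < k" for x y k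
    using mult_ln_le_xlogx[of x "k * y"] that by (simp add: ln_mult algebra_simps)
  show "(\<lambda>(x, y). xlogx x - x * ln y) ((1 - t) *\<^sub>R a + t *\<^sub>R b)
      \<le> (1 - t) * (\<lambda>(x, y). xlogx x - x * ln y) a + t * (\<lambda>(x, y). xlogx x - x * ln y) b"
  proof (cases "X = 0")
    case True
    then have "(1 - t) * x1 = 0" "t * x2 = 0"
      using pos t unfolding X_def by (smt (verit) mult_nonneg_nonneg)+
    then show ?thesis using True t unfolding a b X_def by (auto simp: xlogx_def)
  next
    case False
    define k where "k = X / Y"
    have "0 < k" using \<open>0 \<le> X\<close> \<open>0 < Y\<close> False unfolding k_def by simp
    have "xlogx X - X * ln Y = X * ln k + X - k * Y"
      using False \<open>0 \<le> X\<close> \<open>0 < Y\<close> unfolding k_def by (simp add: xlogx_def ln_div algebra_simps)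
    also have "\<dots> = (1 - t) * (x1 * ln k + x1 - k * y1) + t * (x2 * ln k + x2 - k * y2)"
      unfolding X_def Y_def by (simp add: algebra_simps)
    also have "\<dots> \<le> (1 - t) * (xlogx x1 - x1 * ln y1) + t * (xlogx x2 - x2 * ln y2)"
      using t pos \<open>0 < k\<close> by (intro add_mono mult_left_mono affine_le) auto
    finally show ?thesis unfolding a b X_def Y_def by simp
  qed
qed

lemma gibbs_inequality:
  fixes r q :: "'a \<Rightarrow> real"
  assumes "finite A" "\<And>a. a \<in> A \<Longrightarrow> 0 \<le> r a" "\<And>a. a \<in> A \<Longrightarrow> 0 < q a"
    and "(\<Sum>a\<in>A. q a) \<le> (\<Sum>a\<in>A. r a)"
  shows "(\<Sum>a\<in>A. r a * ln (q a)) \<le> (\<Sum>a\<in>A. xlogx (r a))"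
proof -
  have "(\<Sum>a\<in>A. r a * ln (q a)) \<le> (\<Sum>a\<in>A. xlogx (r a) + q a - r a)"
    using assms by (intro sum_mono mult_ln_le_xlogx) auto
  also have "\<dots> = (\<Sum>a\<in>A. xlogx (r a)) + ((\<Sum>a\<in>A. q a) - (\<Sum>a\<in>A. r a))"
    by (simp add: sum.distrib sum_subtractf)
  finally show ?thesis using assms(4) by linarith
qed

text \<open>Fenchel-Young inequality between the perspective (a, p) \<mapsto> p exp (a / p) and the
  relative entropy, including the degenerate cases p = 0 and r = 0.\<close>
lemma mult_le_perspective_exp_add:
  fixes p q r a :: real
  assumes "0 \<le> p" "0 \<le> q" "p * q \<le> r" "p = 0 \<Longrightarrow> a \<le> 0"
  shows "q * a \<le> p * (xlogx q - q * ln r) + (if 0 < p then p * exp (a / p) else 0) * r - p * q"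
proof (cases "0 < p")
  case False
  with assms show ?thesis by (simp add: mult_nonneg_nonpos)
next
  case True
  have "q * (a / p) \<le> xlogx q - q * ln r + r * exp (a / p) - q"
  proof (cases "r = 0")
    case True
    with assms \<open>0 < p\<close> have "q = 0" by (simp add: mult_le_0_iff)
    with True show ?thesis by (simp add: xlogx_def)
  next
    case False
    with assms have "0 < r" by (smt (verit) mult_nonneg_nonneg)
    with mult_ln_le_xlogx[of q "r * exp (a / p)"] assms(2) show ?thesis
      by (simp add: ln_mult algebra_simps)
  qed
  then have "q * a \<le> p * (xlogx q - q * ln r + r * exp (a / p) - q)"
    using True by (simp add: pos_divide_le_eq mult.commute)
  then show ?thesis using True by (simp add: algebra_simps)
qed

lemma mult_exp_divide_convex:
  fixes p a b t :: real
  assumes "0 < p" "0 \<le> t" "t \<le> 1"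
  shows "p * exp (((1 - t) * a + t * b) / p) \<le> (1 - t) * (p * exp (a / p)) + t * (p * exp (b / p))"
proof -
  have "exp (((1 - t) * a + t * b) / p) \<le> (1 - t) * exp (a / p) + t * exp (b / p)"
    using convex_onD[OF exp_convex, of t "a / p" "b / p"] assms by (simp add: add_divide_distrib)
  then have "p * exp (((1 - t) * a + t * b) / p) \<le> p * ((1 - t) * exp (a / p) + t * exp (b / p))"
    using assms by (intro mult_left_mono) auto
  then show ?thesis by (simp add: algebra_simps)
qed

section \<open>Two minimax theorems\<close>

lemma convex_strictly_dominating_values:
  fixes f :: "'a::real_vector \<Rightarrow> 'n::finite \<Rightarrow> real"
  assumes "convex C" and convex_f: "\<And>n. convex_on C (\<lambda>x. f x n)"
  shows "convex {u::real^'n. \<exists>x\<in>C. \<forall>n. f x n < u$n}"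
  unfolding convex_alt
proof (intro ballI allI impI, elim conjE)
  fix u w :: "real^'n" and t :: real
  assume "u \<in> {u. \<exists>x\<in>C. \<forall>n. f x n < u$n}" "w \<in> {u. \<exists>x\<in>C. \<forall>n. f x n < u$n}" "0 \<le> t" "t \<le> 1"
  then obtain x y where "x \<in> C" "y \<in> C" and u: "\<forall>n. f x n < u$n" and w: "\<forall>n. f y n < w$n"
    by blast
  have "f ((1 - t) *\<^sub>R x + t *\<^sub>R y) n < ((1 - t) *\<^sub>R u + t *\<^sub>R w)$n" for n
  proof -
    have "f ((1 - t) *\<^sub>R x + t *\<^sub>R y) n \<le> (1 - t) * f x n + t * f y n"
      using convex_onD[OF convex_f] \<open>x \<in> C\<close> \<open>y \<in> C\<close> \<open>0 \<le> t\<close> \<open>t \<le> 1\<close> by blast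
    also have "\<dots> < (1 - t) * u$n + t * w$n"
      using u[rule_format, of n] w[rule_format, of n] \<open>0 \<le> t\<close> \<open>t \<le> 1\<close>
      by (smt (verit, best) mult_left_mono mult_strict_left_mono)
    finally show ?thesis by simp
  qed
  moreover have "(1 - t) *\<^sub>R x + t *\<^sub>R y \<in> C"
    using \<open>convex C\<close> \<open>x \<in> C\<close> \<open>y \<in> C\<close> \<open>0 \<le> t\<close> \<open>t \<le> 1\<close> by (simp add: convex_alt)
  ultimately show "(1 - t) *\<^sub>R u + t *\<^sub>R w \<in> {u. \<exists>x\<in>C. \<forall>n. f x n < u$n}" by blast
qed

lemma nonneg_if_inner_bounded_along_axis:
  fixes a u :: "real^'n"
  assumes "\<And>t. 0 \<le> t \<Longrightarrow> b \<le> a \<bullet> (u + axis n t)"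
  shows "0 \<le> a$n"
proof (rule ccontr)
  assume "\<not> 0 \<le> a$n"
  define t where "t = \<bar>a \<bullet> u - b\<bar> / (- a$n) + 1"
  have "0 \<le> t" using \<open>\<not> 0 \<le> a$n\<close> unfolding t_def by (simp add: add_nonneg_nonneg)
  then have "b \<le> a \<bullet> u + a$n * t"
    using assms by (simp add: inner_add_right inner_axis)
  also have "\<dots> = a \<bullet> u - \<bar>a \<bullet> u - b\<bar> + a$n"
    using \<open>\<not> 0 \<le> a$n\<close> unfolding t_def by (simp add: field_simps)
  finally show False using \<open>\<not> 0 \<le> a$n\<close> by linarith
qed

lemma normalized_in_prob_simplex:
  fixes a :: "real^'n"
  assumes "\<And>n. 0 \<le> a$n" "a \<noteq> 0"
  shows "0 < (\<Sum>n\<in>UNIV. a$n)" "(\<chi> n. a$n / (\<Sum>n\<in>UNIV. a$n)) \<in> prob_simplex"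
proof -
  obtain n where "a$n \<noteq> 0" using \<open>a \<noteq> 0\<close> by (metis vec_eq_iff zero_index)
  then show "0 < (\<Sum>n\<in>UNIV. a$n)" using assms(1) by (intro sum_pos2[of _ n]) (auto simp: order_le_less)
  then show "(\<chi> n. a$n / (\<Sum>n\<in>UNIV. a$n)) \<in> prob_simplex"
    using assms(1) by (simp add: prob_simplex_def sum_divide_distrib[symmetric])
qed

text \<open>A finite-game minimax theorem: the diagonal point (c, ..., c) lies outside the convex set of
  vectors strictly dominating some value vector, and the normal of a separating hyperplane is the
  required mixture.\<close>
lemma convex_max_ge_imp_mixture_ge:
  fixes f :: "'a::real_vector \<Rightarrow> 'n::finite \<Rightarrow> real"
  assumes "convex C" and convex_f: "\<And>n. convex_on C (\<lambda>x. f x n)"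
    and max_ge: "\<And>x. x \<in> C \<Longrightarrow> \<exists>n. c \<le> f x n"
  shows "\<exists>p\<in>prob_simplex. \<forall>x\<in>C. c \<le> (\<Sum>n\<in>UNIV. p$n * f x n)"
proof (cases "C = {}")
  case True
  then show ?thesis by (intro bexI[of _ "\<chi> n. 1 / real CARD('n)"]) (auto simp: prob_simplex_def)
next
  case False
  then obtain x0 where "x0 \<in> C" by blast
  define K where "K = {u::real^'n. \<exists>x\<in>C. \<forall>n. f x n < u$n}"
  have "(\<chi> n. c) \<notin> K"
  proof
    assume "(\<chi> n. c) \<in> K"
    then obtain x where "x \<in> C" "\<And>n. f x n < c" unfolding K_def by auto
    with max_ge show False by (meson not_less)
  qed
  moreover have u0: "(\<chi> n. f x0 n + 1) \<in> K"
    unfolding K_def using \<open>x0 \<in> C\<close> by (intro CollectI bexI[of _ x0]) auto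
  moreover have "convex K"
    unfolding K_def by (rule convex_strictly_dominating_values[OF \<open>convex C\<close> convex_f])
  ultimately obtain a b where "a \<noteq> 0" and a_c: "a \<bullet> (\<chi> n. c) \<le> b" and a_K: "\<And>u. u \<in> K \<Longrightarrow> b \<le> a \<bullet> u"
    using separating_hyperplane_sets[of "{\<chi> n. c}" K] by auto
  have a_nonneg: "0 \<le> a$n" for n
  proof (rule nonneg_if_inner_bounded_along_axis[of b a "\<chi> n. f x0 n + 1"])
    fix t :: real assume "0 \<le> t"
    then have "(\<chi> n. f x0 n + 1) + axis n t \<in> K"
      unfolding K_def using \<open>x0 \<in> C\<close> by (intro CollectI bexI[of _ x0]) (auto simp: axis_def)
    then show "b \<le> a \<bullet> ((\<chi> n. f x0 n + 1) + axis n t)" by (rule a_K)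
  qed
  define s where "s = (\<Sum>n\<in>UNIV. a$n)"
  note normalized = normalized_in_prob_simplex[OF a_nonneg \<open>a \<noteq> 0\<close>, folded s_def]
  have "0 < s" by (rule normalized(1))
  have "c * s \<le> (\<Sum>n\<in>UNIV. a$n * f x n)" if "x \<in> C" for x
  proof (rule field_le_epsilon)
    fix e :: real assume "0 < e"
    then have "(\<chi> n. f x n + e / s) \<in> K"
      unfolding K_def using \<open>x \<in> C\<close> \<open>0 < s\<close> by (intro CollectI bexI[of _ x]) auto
    have "c * s = a \<bullet> (\<chi> n. c)" by (simp add: inner_vec_def s_def sum_distrib_left mult.commute)
    also have "\<dots> \<le> a \<bullet> (\<chi> n. f x n + e / s)"
      using a_c a_K[OF \<open>(\<chi> n. f x n + e / s) \<in> K\<close>] by linarith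
    also have "\<dots> = (\<Sum>n\<in>UNIV. a$n * f x n) + s * (e / s)"
      unfolding s_def by (simp add: inner_vec_def distrib_left sum.distrib sum_distrib_right sum_divide_distrib)
    finally show "c * s \<le> (\<Sum>n\<in>UNIV. a$n * f x n) + e"
      using \<open>0 < s\<close> by simp
  qed
  with normalized(2) \<open>0 < s\<close> show ?thesis
    by (intro bexI[of _ "\<chi> n. a$n / s"]) (auto simp: sum_divide_distrib[symmetric] pos_le_divide_eq)
qed

lemma inner_le_SUP:
  fixes Y :: "'a::real_inner set"
  assumes "compact Y" "y \<in> Y"
  shows "V \<bullet> y \<le> (SUP z\<in>Y. V \<bullet> z)"
proof -
  have "compact ((\<lambda>z. V \<bullet> z) ` Y)"
    by (intro compact_continuous_image continuous_intros assms(1))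
  then have "bdd_above ((\<lambda>z. V \<bullet> z) ` Y)"
    by (intro bounded_imp_bdd_above compact_imp_bounded)
  then show ?thesis by (rule cSUP_upper[OF assms(2)])
qed

lemma convex_on_support_function:
  fixes Y :: "'a::real_inner set"
  assumes "compact Y" "Y \<noteq> {}"
  shows "convex_on UNIV (\<lambda>V. SUP y\<in>Y. V \<bullet> y)"
proof (rule convex_onI)
  fix t :: real and V W :: 'a
  assume "0 < t" "t < 1"
  show "(SUP y\<in>Y. ((1 - t) *\<^sub>R V + t *\<^sub>R W) \<bullet> y)
      \<le> (1 - t) * (SUP y\<in>Y. V \<bullet> y) + t * (SUP y\<in>Y. W \<bullet> y)"
  proof (rule cSUP_least[OF assms(2)])
    fix y assume "y \<in> Y"
    have "(1 - t) * (V \<bullet> y) + t * (W \<bullet> y) \<le> (1 - t) * (SUP y\<in>Y. V \<bullet> y) + t * (SUP y\<in>Y. W \<bullet> y)"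
      using \<open>0 < t\<close> \<open>t < 1\<close> inner_le_SUP[OF assms(1) \<open>y \<in> Y\<close>]
      by (intro add_mono mult_left_mono) auto
    then show "((1 - t) *\<^sub>R V + t *\<^sub>R W) \<bullet> y \<le> (1 - t) * (SUP y\<in>Y. V \<bullet> y) + t * (SUP y\<in>Y. W \<bullet> y)"
      by (simp add: inner_add_left)
  qed
qed simp

lemma mem_if_inner_le_support_function:
  fixes Y :: "'a::euclidean_space set"
  assumes "compact Y" "convex Y" "Y \<noteq> {}"
    and le: "\<And>V. V \<bullet> z \<le> (SUP y\<in>Y. V \<bullet> y) + B"
  shows "z \<in> Y"
proof (rule ccontr)
  assume "z \<notin> Y"
  then obtain a c where "a \<bullet> z < c" and a_Y: "\<And>y. y \<in> Y \<Longrightarrow> c < a \<bullet> y"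
    using separating_hyperplane_closed_point[OF \<open>convex Y\<close> compact_imp_closed[OF \<open>compact Y\<close>]] by blast
  \<comment> \<open>the functional -k a separates z from Y by a margin growing linearly in k\<close>
  define k where "k = (\<bar>B\<bar> + 1) / (c - a \<bullet> z)"
  have "0 < k" using \<open>a \<bullet> z < c\<close> unfolding k_def by simp
  have "(SUP y\<in>Y. (- k *\<^sub>R a) \<bullet> y) \<le> - k * c"
    using a_Y \<open>0 < k\<close> by (intro cSUP_least[OF \<open>Y \<noteq> {}\<close>]) (simp add: less_imp_le)
  with le[of "- k *\<^sub>R a"] have "k * (c - a \<bullet> z) \<le> B"
    by (simp add: algebra_simps)
  also have "k * (c - a \<bullet> z) = \<bar>B\<bar> + 1"
    using \<open>a \<bullet> z < c\<close> unfolding k_def by simp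
  finally show False by simp
qed

lemma convex_strict_epigraph:
  assumes "convex_on UNIV h"
  shows "convex {(x, s). h x < (s::real)}"
  unfolding convex_alt
proof (intro ballI allI impI, elim conjE)
  fix z z' :: "'a \<times> real" and t :: real
  assume "z \<in> {(x, s). h x < s}" "z' \<in> {(x, s). h x < s}" "0 \<le> t" "t \<le> 1"
  then obtain x s x' s' where z: "z = (x, s)" "h x < s" and z': "z' = (x', s')" "h x' < s'"
    by auto
  have "h ((1 - t) *\<^sub>R x + t *\<^sub>R x') \<le> (1 - t) * h x + t * h x'"
    using convex_onD[OF assms] \<open>0 \<le> t\<close> \<open>t \<le> 1\<close> by blast
  also have "\<dots> < (1 - t) * s + t * s'"
    using z z' \<open>0 \<le> t\<close> \<open>t \<le> 1\<close> by (smt (verit, best) mult_left_mono mult_strict_left_mono)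
  finally show "(1 - t) *\<^sub>R z + t *\<^sub>R z' \<in> {(x, s). h x < s}" unfolding z z' by simp
qed

lemma strict_epigraph_separator_normal:
  fixes W :: "'a::real_inner"
  assumes "(W, \<alpha>) \<noteq> 0" "h 0 = 0"
    and sep: "\<And>V e. 0 < e \<Longrightarrow> b \<le> W \<bullet> V + \<alpha> * (h V + e)"
  shows "0 < \<alpha>" "b \<le> W \<bullet> V + \<alpha> * h V"
proof -
  show "0 < \<alpha>"
  proof (rule ccontr)
    assume "\<not> 0 < \<alpha>"
    show False
    proof (cases "\<alpha> = 0")
      case True
      with assms(1) have "0 < W \<bullet> W" by (simp add: zero_prod_def)
      have "b \<le> W \<bullet> (- ((\<bar>b\<bar> + 1) / (W \<bullet> W)) *\<^sub>R W)"
        using sep[where V="- ((\<bar>b\<bar> + 1) / (W \<bullet> W)) *\<^sub>R W" and e=1] True by simp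
      also have "\<dots> = - (\<bar>b\<bar> + 1)" using \<open>0 < W \<bullet> W\<close> by simp
      finally show False by simp
    next
      case False
      with \<open>\<not> 0 < \<alpha>\<close> have "\<alpha> < 0" by simp
      then have "b \<le> \<alpha> * ((\<bar>b\<bar> + 1) / - \<alpha>)"
        using sep[where V=0 and e="(\<bar>b\<bar> + 1) / - \<alpha>"] \<open>h 0 = 0\<close> by (simp add: divide_pos_neg)
      also have "\<dots> = - (\<bar>b\<bar> + 1)" using \<open>\<alpha> < 0\<close> by simp
      finally show False by simp
    qed
  qed
  show "b \<le> W \<bullet> V + \<alpha> * h V"
  proof (rule field_le_epsilon)
    fix e :: real assume "0 < e"
    then show "b \<le> W \<bullet> V + \<alpha> * h V + e"
      using sep[where V=V and e="e / \<alpha>"] \<open>0 < \<alpha>\<close> by (simp add: distrib_left)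
  qed
qed

text \<open>Minimax for the bilinear pairing V \<bullet> y - s over a compact convex Y and a convex set S of
  pairs (V, s): separate S from the strict epigraph of the support function of Y; the normal of
  the separating hyperplane, rescaled, is the common point y.\<close>
lemma support_function_minimax:
  fixes Y :: "'a::euclidean_space set" and S :: "('a \<times> real) set"
  assumes "compact Y" "convex Y" "Y \<noteq> {}" "convex S"
    and below: "\<And>V s. (V, s) \<in> S \<Longrightarrow> s \<le> (SUP y\<in>Y. V \<bullet> y)"
  shows "\<exists>y\<in>Y. \<forall>(V, s)\<in>S. s \<le> V \<bullet> y"
proof (cases "S = {}")
  case False
  define h where "h V = (SUP y\<in>Y. V \<bullet> y)" for V
  have "h 0 = 0" using \<open>Y \<noteq> {}\<close> unfolding h_def by simp
  define U where "U = {(V, s). h V < s}"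
  have "convex U"
    unfolding U_def h_def by (rule convex_strict_epigraph[OF convex_on_support_function[OF \<open>compact Y\<close> \<open>Y \<noteq> {}\<close>]])
  have "(0, 1) \<in> U" using \<open>h 0 = 0\<close> unfolding U_def by simp
  then have "U \<noteq> {}" by blast
  have "S \<inter> U = {}"
    unfolding U_def h_def by (auto dest: below)
  obtain a b where "a \<noteq> 0" and a_S: "\<And>x. x \<in> S \<Longrightarrow> a \<bullet> x \<le> b"
    and a_U: "\<And>x. x \<in> U \<Longrightarrow> b \<le> a \<bullet> x"
    using separating_hyperplane_sets[OF \<open>convex S\<close> \<open>convex U\<close> False \<open>U \<noteq> {}\<close> \<open>S \<inter> U = {}\<close>] by blast
  obtain W \<alpha> where a: "a = (W, \<alpha>)" by fastforce
  have "b \<le> W \<bullet> V + \<alpha> * (h V + e)" if "0 < e" for V e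
    using a_U[of "(V, h V + e)"] that unfolding U_def a by simp
  note normal = strict_epigraph_separator_normal[OF \<open>a \<noteq> 0\<close>[unfolded a] \<open>h 0 = 0\<close> this]
  have "0 < \<alpha>" by (rule normal(1))
  have "b \<le> 0" using normal(2)[of 0] \<open>h 0 = 0\<close> by simp
  define y where "y = - (1 / \<alpha>) *\<^sub>R W"
  have "V \<bullet> y \<le> h V + (- b / \<alpha>)" for V
    using normal(2)[of V] \<open>0 < \<alpha>\<close> unfolding y_def by (simp add: field_simps inner_commute)
  then have "y \<in> Y"
    using mem_if_inner_le_support_function[OF \<open>compact Y\<close> \<open>convex Y\<close> \<open>Y \<noteq> {}\<close>] unfolding h_def by blast
  moreover have "s \<le> V \<bullet> y" if "(V, s) \<in> S" for V s
    using a_S[OF that] \<open>b \<le> 0\<close> \<open>0 < \<alpha>\<close> unfolding a y_def by (simp add: field_simps inner_commute)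
  ultimately show ?thesis by blast
qed (use \<open>Y \<noteq> {}\<close> in auto)

section \<open>Relative entropy and the dual problem\<close>

lemma prob_simplexD:
  assumes "p \<in> prob_simplex" shows "0 \<le> p$n" "(\<Sum>n\<in>UNIV. p$n) = 1"
  using assms by (auto simp: prob_simplex_def)

lemma stoch_matricesD:
  assumes "Q \<in> stoch_matrices" shows "0 \<le> Q$n$m" "(\<Sum>m\<in>UNIV. Q$n$m) = 1"
  using assms by (auto simp: stoch_matrices_def)

definition output_dist :: "real^'n \<Rightarrow> real^'m^'n \<Rightarrow> real^'m" where
  "output_dist p Q = (\<chi> m. \<Sum>n\<in>UNIV. p$n * Q$n$m)"

lemma output_dist_ge:
  assumes "p \<in> prob_simplex" "Q \<in> stoch_matrices"
  shows "p$n * Q$n$m \<le> output_dist p Q $ m"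
  unfolding output_dist_def
  using member_le_sum[of n UNIV "\<lambda>n. p$n * Q$n$m"] prob_simplexD(1)[OF assms(1)] stoch_matricesD(1)[OF assms(2)]
  by simp

lemma output_dist_nonneg:
  assumes "p \<in> prob_simplex" "Q \<in> stoch_matrices"
  shows "0 \<le> output_dist p Q $ m"
  unfolding output_dist_def
  using prob_simplexD(1)[OF assms(1)] stoch_matricesD(1)[OF assms(2)] by (simp add: sum_nonneg)

lemma sum_output_dist:
  assumes "p \<in> prob_simplex" "Q \<in> stoch_matrices"
  shows "(\<Sum>m\<in>UNIV. output_dist p Q $ m) = 1"
proof -
  have "(\<Sum>m\<in>UNIV. output_dist p Q $ m) = (\<Sum>n\<in>UNIV. \<Sum>m\<in>UNIV. p$n * Q$n$m)"
    unfolding output_dist_def vec_lambda_beta by (rule sum.swap)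
  also have "\<dots> = (\<Sum>n\<in>UNIV. p$n * (\<Sum>m\<in>UNIV. Q$n$m))"
    by (simp add: sum_distrib_left)
  finally have "(\<Sum>m\<in>UNIV. output_dist p Q $ m) = (\<Sum>n\<in>UNIV. p$n * (\<Sum>m\<in>UNIV. Q$n$m))" .
  then show ?thesis using prob_simplexD[OF assms(1)] stoch_matricesD(2)[OF assms(2)] by simp
qed

text \<open>The relative entropy D(r \<parallel> q); it is only meaningful for positive q,
  since ln 0 = 0 in HOL.\<close>
definition kl_div :: "real^'m \<Rightarrow> real^'m \<Rightarrow> real" where
  "kl_div r q = (\<Sum>m\<in>UNIV. xlogx (r$m) - r$m * ln (q$m))"

lemma kl_div_nonneg:
  assumes "\<And>m. 0 \<le> r$m" "\<And>m. 0 < q$m" "(\<Sum>m\<in>UNIV. q$m) \<le> (\<Sum>m\<in>UNIV. r$m)"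
  shows "0 \<le> kl_div r q"
  using gibbs_inequality[of UNIV "\<lambda>m. r$m" "\<lambda>m. q$m"] assms
  unfolding kl_div_def by (simp add: sum_subtractf)

lemma convex_on_kl_div:
  "convex_on {(r, q). (\<forall>m. 0 \<le> r$m) \<and> (\<forall>m. 0 < q$m)} (\<lambda>(r, q). kl_div r q)"
proof (rule convex_onI)
  show "convex {(r, q). (\<forall>m. 0 \<le> (r::real^'m)$m) \<and> (\<forall>m. 0 < (q::real^'m)$m)}" (is "convex ?D")
  proof (rule convexI)
    fix x y :: "(real^'m) \<times> (real^'m)" and u v :: real
    assume "x \<in> ?D" "y \<in> ?D"
      and uv: "0 \<le> u" "0 \<le> v" "u + v = 1"
    then obtain r q r' q' where "x = (r, q)" "y = (r', q')"
      and pos: "\<And>m. 0 \<le> r$m" "\<And>m. 0 < q$m" "\<And>m. 0 \<le> r'$m" "\<And>m. 0 < q'$m"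
      by auto
    moreover have "0 < u * q$m + v * q'$m" for m
      using uv pos(2,4)[of m] by (cases "u = 0") (auto intro: add_pos_nonneg)
    ultimately show "u *\<^sub>R x + v *\<^sub>R y \<in> ?D"
      using uv pos by simp
  qed
next
  fix t :: real and x y :: "(real^'m) \<times> (real^'m)"
  assume "0 < t" "t < 1" "x \<in> {(r, q). (\<forall>m. 0 \<le> r$m) \<and> (\<forall>m. 0 < q$m)}"
    "y \<in> {(r, q). (\<forall>m. 0 \<le> r$m) \<and> (\<forall>m. 0 < q$m)}"
  then obtain r q r' q' where x: "x = (r, q)" and y: "y = (r', q')"
    and pos: "\<And>m. 0 \<le> r$m" "\<And>m. 0 < q$m" "\<And>m. 0 \<le> r'$m" "\<And>m. 0 < q'$m"
    by auto
  have term_le: "xlogx ((1 - t) * r$m + t * r'$m) - ((1 - t) * r$m + t * r'$m) * ln ((1 - t) * q$m + t * q'$m)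
      \<le> (1 - t) * (xlogx (r$m) - r$m * ln (q$m)) + t * (xlogx (r'$m) - r'$m * ln (q'$m))" for m
    using convex_onD[OF convex_on_xlogx_minus_mult_ln, of t "(r$m, q$m)" "(r'$m, q'$m)"]
      \<open>0 < t\<close> \<open>t < 1\<close> pos[of m] by simp
  have "kl_div ((1 - t) *\<^sub>R r + t *\<^sub>R r') ((1 - t) *\<^sub>R q + t *\<^sub>R q')
      \<le> (\<Sum>m\<in>UNIV. (1 - t) * (xlogx (r$m) - r$m * ln (q$m)) + t * (xlogx (r'$m) - r'$m * ln (q'$m)))"
    unfolding kl_div_def by (rule sum_mono) (simp add: term_le)
  also have "\<dots> = (1 - t) * kl_div r q + t * kl_div r' q'"
    unfolding kl_div_def by (simp add: sum.distrib sum_distrib_left)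
  finally have "kl_div ((1 - t) *\<^sub>R r + t *\<^sub>R r') ((1 - t) *\<^sub>R q + t *\<^sub>R q')
      \<le> (1 - t) * kl_div r q + t * kl_div r' q'" .
  then show "(\<lambda>(r, q). kl_div r q) ((1 - t) *\<^sub>R x + t *\<^sub>R y)
      \<le> (1 - t) * (\<lambda>(r, q). kl_div r q) x + t * (\<lambda>(r, q). kl_div r q) y"
    unfolding x y by simp
qed

lemma mutual_info_eq_sum_kl_div:
  assumes p: "p \<in> prob_simplex" and Q: "Q \<in> stoch_matrices"
  shows "mutual_info p Q = (\<Sum>n\<in>UNIV. p$n * kl_div (Q$n) (output_dist p Q))"
proof -
  let ?r = "output_dist p Q"
  have termwise: "(if p$n * Q$n$m = 0 then 0 else p$n * Q$n$m * ln (Q$n$m / ?r$m))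
      = p$n * (xlogx (Q$n$m) - Q$n$m * ln (?r$m))" for n m
  proof (cases "p$n * Q$n$m = 0")
    case False
    with prob_simplexD(1)[OF p] stoch_matricesD(1)[OF Q] have "0 < p$n" "0 < Q$n$m"
      by (auto simp: less_le)
    moreover from this have "0 < ?r$m" using output_dist_ge[OF p Q, of n m] by (smt (verit) mult_pos_pos)
    ultimately show ?thesis by (simp add: ln_div xlogx_eq algebra_simps)
  qed (auto simp: xlogx_def)
  have "(\<Sum>l\<in>UNIV. p$l * Q$l$m) = ?r$m" for m
    by (simp add: output_dist_def)
  then show ?thesis
    unfolding mutual_info_def kl_div_def sum_distrib_left by (intro sum.cong refl) (simp only: termwise)
qed

lemma sum_kl_div_eq_mutual_info_add:
  assumes p: "p \<in> prob_simplex" and Q: "Q \<in> stoch_matrices"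
  shows "(\<Sum>n\<in>UNIV. p$n * kl_div (Q$n) q) = mutual_info p Q + kl_div (output_dist p Q) q"
proof -
  let ?r = "output_dist p Q"
  have "(\<Sum>n\<in>UNIV. p$n * kl_div (Q$n) q) - (\<Sum>n\<in>UNIV. p$n * kl_div (Q$n) ?r)
      = (\<Sum>n\<in>UNIV. \<Sum>m\<in>UNIV. p$n * Q$n$m * (ln (?r$m) - ln (q$m)))"
    by (simp add: kl_div_def sum_subtractf[symmetric] sum_distrib_left algebra_simps)
  also have "\<dots> = (\<Sum>m\<in>UNIV. ?r$m * (ln (?r$m) - ln (q$m)))"
    by (subst sum.swap) (simp add: output_dist_def sum_distrib_right)
  also have "\<dots> = kl_div ?r q"
    by (simp add: kl_div_def xlogx_eq algebra_simps)
  finally show ?thesis using mutual_info_eq_sum_kl_div[OF p Q] by linarith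
qed

definition softmax :: "real^'m \<Rightarrow> real^'m" where
  "softmax v = (\<chi> m. exp (v$m) / (\<Sum>l\<in>UNIV. exp (v$l)))"

lemma softmax_pos: "0 < softmax v $ m"
  by (simp add: softmax_def sum_pos)

lemma sum_softmax: "(\<Sum>m\<in>UNIV. softmax v $ m) = 1"
  by (simp add: softmax_def sum_divide_distrib[symmetric] sum_pos less_imp_neq[symmetric])

lemma softmax_ln:
  assumes "\<And>m. 0 < q$m" "(\<Sum>m\<in>UNIV. q$m) = 1"
  shows "softmax (\<chi> m. ln (q$m)) = q"
  using assms by (simp add: softmax_def vec_eq_iff)

lemma dual_obj_eq_Max_kl_div:
  assumes "Q \<in> stoch_matrices"
  shows "dual_obj v Q = Max (range (\<lambda>n. kl_div (Q$n) (softmax v)))"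
proof -
  let ?S = "\<Sum>l\<in>UNIV. exp (v$l)"
  have "0 < ?S" by (simp add: sum_pos)
  then have ln_softmax: "ln (softmax v $ m) = v$m - ln ?S" for m
    by (simp add: softmax_def ln_div)
  have "kl_div (Q$n) (softmax v) = (\<Sum>m\<in>UNIV. Q$n$m) * ln ?S + (\<Sum>m\<in>UNIV. xlogx (Q$n$m) - Q$n$m * v$m)" for n
    by (simp add: kl_div_def ln_softmax algebra_simps sum.distrib sum_subtractf sum_distrib_right)
  then have "kl_div (Q$n) (softmax v) = (\<Sum>m\<in>UNIV. xlogx (Q$n$m) - Q$n$m * v$m) + ln ?S" for n
    using stoch_matricesD(2)[OF assms] by simp
  then have "Max (range (\<lambda>n. kl_div (Q$n) (softmax v)))
      = Max (range (\<lambda>n. \<Sum>m\<in>UNIV. xlogx (Q$n$m) - Q$n$m * v$m)) + ln ?S"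
    by (simp add: Max_add_commute)
  then show ?thesis unfolding dual_obj_def by simp
qed

lemma mutual_info_le_dual_obj:
  assumes p: "p \<in> prob_simplex" and Q: "Q \<in> stoch_matrices"
  shows "mutual_info p Q \<le> dual_obj v Q"
proof -
  have "0 \<le> kl_div (output_dist p Q) (softmax v)"
    by (intro kl_div_nonneg) (simp_all add: output_dist_nonneg[OF p Q] softmax_pos sum_output_dist[OF p Q] sum_softmax)
  then have "mutual_info p Q \<le> (\<Sum>n\<in>UNIV. p$n * kl_div (Q$n) (softmax v))"
    using sum_kl_div_eq_mutual_info_add[OF p Q, of "softmax v"] by linarith
  also have "\<dots> \<le> (\<Sum>n\<in>UNIV. p$n * dual_obj v Q)"
    unfolding dual_obj_eq_Max_kl_div[OF Q]
    by (intro sum_mono mult_left_mono prob_simplexD(1)[OF p] Max_ge) auto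
  also have "\<dots> = dual_obj v Q"
    using prob_simplexD(2)[OF p] by (simp flip: sum_distrib_right)
  finally show ?thesis .
qed

lemma kl_div_smoothed_le:
  fixes r :: "real^'m" and d :: real
  assumes "\<And>m. 0 \<le> r$m" "(\<Sum>m\<in>UNIV. r$m) = 1" "0 < d"
  shows "kl_div r (\<chi> m. (r$m + d) / (1 + CARD('m) * d)) \<le> CARD('m) * d"
proof -
  let ?D = "1 + CARD('m) * d"
  have "0 < ?D" using \<open>0 < d\<close> by (simp add: add_pos_nonneg)
  have "xlogx (r$m) - r$m * ln ((r$m + d) / ?D) \<le> r$m * ln ?D" for m
  proof -
    have "r$m * ln (r$m) \<le> r$m * ln (r$m + d)"
      using assms(1)[of m] \<open>0 < d\<close> by (cases "r$m = 0") (auto intro: mult_left_mono)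
    then show ?thesis
      using assms(1)[of m] \<open>0 < d\<close> \<open>0 < ?D\<close> by (simp add: xlogx_eq ln_div algebra_simps)
  qed
  then have "kl_div r (\<chi> m. (r$m + d) / ?D) \<le> (\<Sum>m\<in>UNIV. r$m * ln ?D)"
    unfolding kl_div_def by (intro sum_mono) simp
  also have "\<dots> = ln ?D"
    using assms(2) by (simp flip: sum_distrib_right)
  also have "\<dots> \<le> CARD('m) * d"
    using ln_add_one_self_le_self[of "CARD('m) * d"] \<open>0 < d\<close> by simp
  finally show ?thesis .
qed

lemma convex_positive_simplex: "convex {q::real^'m. (\<forall>m. 0 < q$m) \<and> (\<Sum>m\<in>UNIV. q$m) = 1}"
proof (rule convexI)
  fix q q' :: "real^'m" and u v :: real
  assume "q \<in> {q. (\<forall>m. 0 < q$m) \<and> (\<Sum>m\<in>UNIV. q$m) = 1}" "q' \<in> {q. (\<forall>m. 0 < q$m) \<and> (\<Sum>m\<in>UNIV. q$m) = 1}"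
    and uv: "0 \<le> u" "0 \<le> v" "u + v = 1"
  then have "0 < u * q$m + v * q'$m" for m
    using convex_bound_lt[of "- q$m" 0 "- q'$m" u v] uv by simp
  with uv \<open>q \<in> _\<close> \<open>q' \<in> _\<close>
  show "u *\<^sub>R q + v *\<^sub>R q' \<in> {q. (\<forall>m. 0 < q$m) \<and> (\<Sum>m\<in>UNIV. q$m) = 1}"
    by (simp add: sum.distrib flip: sum_distrib_left)
qed

lemma convex_on_kl_div_row:
  fixes \<Q> :: "(real^'m^'n) set"
  assumes "\<Q> \<subseteq> stoch_matrices" "convex \<Q>"
  shows "convex_on (\<Q> \<times> {q::real^'m. (\<forall>m. 0 < q$m) \<and> (\<Sum>m\<in>UNIV. q$m) = 1}) (\<lambda>x. kl_div (fst x $ n) (snd x))"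
proof (rule convex_onI)
  fix t :: real and x y
  assume "0 < t" "t < 1" "x \<in> \<Q> \<times> {q::real^'m. (\<forall>m. 0 < q$m) \<and> (\<Sum>m\<in>UNIV. q$m) = 1}"
    "y \<in> \<Q> \<times> {q::real^'m. (\<forall>m. 0 < q$m) \<and> (\<Sum>m\<in>UNIV. q$m) = 1}"
  then obtain Q q Q' q' where "x = (Q, q)" "y = (Q', q')" "Q \<in> stoch_matrices" "Q' \<in> stoch_matrices"
    "\<forall>m. 0 < q$m" "\<forall>m. 0 < q'$m"
    using assms(1) by blast
  with convex_onD[OF convex_on_kl_div, of t "(Q$n, q)" "(Q'$n, q')"] \<open>0 < t\<close> \<open>t < 1\<close>
  show "kl_div (fst ((1 - t) *\<^sub>R x + t *\<^sub>R y) $ n) (snd ((1 - t) *\<^sub>R x + t *\<^sub>R y))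
      \<le> (1 - t) * kl_div (fst x $ n) (snd x) + t * kl_div (fst y $ n) (snd y)"
    by (simp add: stoch_matricesD(1))
qed (intro convex_Times assms(2) convex_positive_simplex)

text \<open>The mutual information is the infimum over positive output distributions q of the average
  relative entropy; the infimum is approached by mixing the output distribution with the uniform one.\<close>
lemma mutual_info_ge_if_sum_kl_div_ge:
  fixes Q :: "real^'m^'n"
  assumes p: "p \<in> prob_simplex" and Q: "Q \<in> stoch_matrices"
    and ge: "\<And>q. (\<forall>m. 0 < q$m) \<Longrightarrow> (\<Sum>m\<in>UNIV. q$m) = 1 \<Longrightarrow> c \<le> (\<Sum>n\<in>UNIV. p$n * kl_div (Q$n) q)"
  shows "c \<le> mutual_info p Q"
proof (rule field_le_epsilon)
  fix e :: real assume "0 < e"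
  let ?r = "output_dist p Q"
  define d where "d = e / CARD('m)"
  define q where "q = (\<chi> m. (?r$m + d) / (1 + CARD('m) * d))"
  have "0 < d" using \<open>0 < e\<close> unfolding d_def by simp
  then have "0 < 1 + real CARD('m) * d" by (simp add: add_pos_nonneg)
  then have "c \<le> (\<Sum>n\<in>UNIV. p$n * kl_div (Q$n) q)"
    using sum_output_dist[OF p Q] output_dist_nonneg[OF p Q] \<open>0 < d\<close> unfolding q_def
    by (intro ge) (auto intro!: divide_pos_pos add_nonneg_pos simp: sum.distrib simp flip: sum_divide_distrib)
  also have "\<dots> = mutual_info p Q + kl_div ?r q"
    by (rule sum_kl_div_eq_mutual_info_add[OF p Q])
  also have "kl_div ?r q \<le> e"
    using kl_div_smoothed_le[of ?r d] output_dist_nonneg[OF p Q] sum_output_dist[OF p Q] \<open>0 < d\<close>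
    unfolding q_def d_def by simp
  finally show "c \<le> mutual_info p Q + e" by simp
qed

lemma exists_input_mutual_info_ge:
  fixes \<Q> :: "(real^'m^'n) set"
  assumes "convex \<Q>" and stoch: "\<Q> \<subseteq> stoch_matrices"
    and le_dual: "\<And>v Q. Q \<in> \<Q> \<Longrightarrow> c \<le> dual_obj v Q"
  shows "\<exists>p\<in>prob_simplex. \<forall>Q\<in>\<Q>. c \<le> mutual_info p Q"
proof -
  define C :: "((real^'m^'n) \<times> (real^'m)) set"
    where "C = \<Q> \<times> {q. (\<forall>m. 0 < q$m) \<and> (\<Sum>m\<in>UNIV. q$m) = 1}"
  \<comment> \<open>at q the dual objective with v = ln q is the largest row divergence\<close>
  have "\<exists>n. c \<le> kl_div (fst x $ n) (snd x)" if "x \<in> C" for x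
  proof -
    obtain Q q where "x = (Q, q)" by fastforce
    with that have "Q \<in> \<Q>" "\<forall>m. 0 < q$m" "(\<Sum>m\<in>UNIV. q$m) = 1"
      unfolding C_def by auto
    then have c_le: "c \<le> Max (range (\<lambda>n. kl_div (Q$n) q))"
      using le_dual[of Q "\<chi> m. ln (q$m)"] stoch by (simp add: dual_obj_eq_Max_kl_div softmax_ln subsetD)
    have "Max (range (\<lambda>n. kl_div (Q$n) q)) \<in> range (\<lambda>n. kl_div (Q$n) q)"
      by (rule Max_in) simp_all
    then obtain n where "Max (range (\<lambda>n. kl_div (Q$n) q)) = kl_div (Q$n) q"
      by blast
    with c_le \<open>x = (Q, q)\<close> show ?thesis by auto
  qed
  then obtain p where "p \<in> prob_simplex"
    and "\<And>x. x \<in> C \<Longrightarrow> c \<le> (\<Sum>n\<in>UNIV. p$n * kl_div (fst x $ n) (snd x))"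
    using convex_max_ge_imp_mixture_ge[of C "\<lambda>x n. kl_div (fst x $ n) (snd x)" c]
      convex_Times[OF \<open>convex \<Q>\<close> convex_positive_simplex] convex_on_kl_div_row[OF stoch \<open>convex \<Q>\<close>]
    unfolding C_def by blast
  then have "c \<le> mutual_info p Q" if "Q \<in> \<Q>" for Q
    using that stoch unfolding C_def
    by (intro mutual_info_ge_if_sum_kl_div_ge[OF \<open>p \<in> prob_simplex\<close>]) auto
  with \<open>p \<in> prob_simplex\<close> show ?thesis by blast
qed

section \<open>The primal problem\<close>

lemma sum_persp_exp:
  assumes "p \<in> prob_simplex"
  shows "(\<Sum>n\<in>UNIV. persp_exp (p$n) (lam$n) (V$n$m)) =
    (if \<exists>n. p$n = 0 \<and> V$n$m < lam$n then \<infinity>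
     else ereal (\<Sum>n | 0 < p$n. p$n * exp ((lam$n - V$n$m) / p$n)))"
proof (cases "\<exists>n. p$n = 0 \<and> V$n$m < lam$n")
  case True
  then obtain n where "p$n = 0" "V$n$m < lam$n" by blast
  then have "persp_exp (p$n) (lam$n) (V$n$m) = \<infinity>" by (simp add: persp_exp_def)
  with True show ?thesis by (auto simp: sum_Pinfty)
next
  case False
  with prob_simplexD(1)[OF assms]
  have "persp_exp (p$n) (lam$n) (V$n$m) = ereal (if 0 < p$n then p$n * exp ((lam$n - V$n$m) / p$n) else 0)" for n
    by (auto simp: persp_exp_def not_less order_le_less)
  with False show ?thesis by (simp add: sum.If_cases)
qed

lemma primal_feasible_iff:
  "primal_feasible p lam V \<longleftrightarrow> p \<in> prob_simplex \<and> (\<forall>n m. p$n = 0 \<longrightarrow> lam$n \<le> V$n$m) \<and>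
     (\<forall>m. (\<Sum>n | 0 < p$n. p$n * exp ((lam$n - V$n$m) / p$n)) \<le> 1)"
  by (auto simp: primal_feasible_def sum_persp_exp not_less split: if_splits)

lemma convex_primal_feasible:
  fixes p :: "real^'n"
  shows "convex {(lam, V :: real^'m^'n). primal_feasible p lam V}" (is "convex ?F")
  unfolding convex_alt
proof (intro ballI allI impI, elim conjE)
  fix x y :: "(real^'n) \<times> (real^'m^'n)" and t :: real
  assume "x \<in> ?F" "y \<in> ?F" and t: "0 \<le> t" "t \<le> 1"
  then obtain lam V lam' V' where xy: "x = (lam, V)" "y = (lam', V')"
    and p: "p \<in> prob_simplex"
    and zero: "\<And>n m. p$n = 0 \<Longrightarrow> lam$n \<le> V$n$m" "\<And>n m. p$n = 0 \<Longrightarrow> lam'$n \<le> V'$n$m"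
    and sum: "\<And>m. (\<Sum>n | 0 < p$n. p$n * exp ((lam$n - V$n$m) / p$n)) \<le> 1"
      "\<And>m. (\<Sum>n | 0 < p$n. p$n * exp ((lam'$n - V'$n$m) / p$n)) \<le> 1"
    by (auto simp: primal_feasible_iff)
  define lt Vt where "lt = (1 - t) *\<^sub>R lam + t *\<^sub>R lam'" and "Vt = (1 - t) *\<^sub>R V + t *\<^sub>R V'"
  have "lt$n \<le> Vt$n$m" if "p$n = 0" for n m
    using zero[OF that, of m] t unfolding lt_def Vt_def by (simp add: add_mono mult_left_mono)
  moreover have "(\<Sum>n | 0 < p$n. p$n * exp ((lt$n - Vt$n$m) / p$n)) \<le> 1" for m
  proof -
    have "lt$n - Vt$n$m = (1 - t) * (lam$n - V$n$m) + t * (lam'$n - V'$n$m)" for n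
      unfolding lt_def Vt_def by (simp add: algebra_simps)
    then have "(\<Sum>n | 0 < p$n. p$n * exp ((lt$n - Vt$n$m) / p$n))
        \<le> (\<Sum>n | 0 < p$n. (1 - t) * (p$n * exp ((lam$n - V$n$m) / p$n)) + t * (p$n * exp ((lam'$n - V'$n$m) / p$n)))"
      using mult_exp_divide_convex t by (intro sum_mono) simp
    also have "\<dots> = (1 - t) * (\<Sum>n | 0 < p$n. p$n * exp ((lam$n - V$n$m) / p$n))
        + t * (\<Sum>n | 0 < p$n. p$n * exp ((lam'$n - V'$n$m) / p$n))"
      by (simp add: sum.distrib sum_distrib_left)
    also have "\<dots> \<le> (1 - t) * 1 + t * 1"
      using sum t by (intro add_mono mult_left_mono) auto
    finally show ?thesis by simp
  qed
  ultimately show "(1 - t) *\<^sub>R x + t *\<^sub>R y \<in> ?F"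
    using p unfolding xy lt_def Vt_def by (simp add: primal_feasible_iff)
qed

lemma primal_feasible_le_mutual_info:
  assumes feasible: "primal_feasible p lam V" and Q: "Q \<in> stoch_matrices"
  shows "(\<Sum>n\<in>UNIV. lam$n) - V \<bullet> Q \<le> mutual_info p Q"
proof -
  let ?r = "output_dist p Q"
  define g where "g n m = (if 0 < p$n then p$n * exp ((lam$n - V$n$m) / p$n) else 0)" for n m
  have p: "p \<in> prob_simplex" and zero: "\<And>n m. p$n = 0 \<Longrightarrow> lam$n \<le> V$n$m"
    and "\<And>m. (\<Sum>n | 0 < p$n. p$n * exp ((lam$n - V$n$m) / p$n)) \<le> 1"
    using feasible by (auto simp: primal_feasible_iff)
  then have sum_g: "(\<Sum>n\<in>UNIV. g n m) \<le> 1" for m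
    by (simp add: g_def sum.If_cases)
  have termwise: "Q$n$m * (lam$n - V$n$m) \<le> p$n * (xlogx (Q$n$m) - Q$n$m * ln (?r$m)) + g n m * ?r$m - p$n * Q$n$m"
    for n m
    unfolding g_def using prob_simplexD(1)[OF p] stoch_matricesD(1)[OF Q] output_dist_ge[OF p Q] zero
    by (intro mult_le_perspective_exp_add) auto
  have "(\<Sum>n\<in>UNIV. lam$n) - V \<bullet> Q = (\<Sum>n\<in>UNIV. \<Sum>m\<in>UNIV. Q$n$m * (lam$n - V$n$m))"
    using stoch_matricesD(2)[OF Q]
    by (simp add: inner_vec_def algebra_simps sum_subtractf flip: sum_distrib_left)
  also have "\<dots> \<le> (\<Sum>n\<in>UNIV. \<Sum>m\<in>UNIV. p$n * (xlogx (Q$n$m) - Q$n$m * ln (?r$m)) + g n m * ?r$m - p$n * Q$n$m)"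
    by (intro sum_mono termwise)
  also have "\<dots> = (\<Sum>n\<in>UNIV. \<Sum>m\<in>UNIV. p$n * (xlogx (Q$n$m) - Q$n$m * ln (?r$m)))
      + (\<Sum>n\<in>UNIV. \<Sum>m\<in>UNIV. g n m * ?r$m) - (\<Sum>n\<in>UNIV. \<Sum>m\<in>UNIV. p$n * Q$n$m)"
    by (simp add: sum.distrib sum_subtractf)
  also have "(\<Sum>n\<in>UNIV. \<Sum>m\<in>UNIV. p$n * (xlogx (Q$n$m) - Q$n$m * ln (?r$m))) = mutual_info p Q"
    unfolding mutual_info_eq_sum_kl_div[OF p Q] kl_div_def by (simp add: sum_distrib_left)
  also have "(\<Sum>n\<in>UNIV. \<Sum>m\<in>UNIV. g n m * ?r$m) = (\<Sum>m\<in>UNIV. (\<Sum>n\<in>UNIV. g n m) * ?r$m)"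
    by (subst sum.swap) (simp add: sum_distrib_right)
  also have "\<dots> \<le> (\<Sum>m\<in>UNIV. ?r$m)"
    using mult_right_mono[OF sum_g output_dist_nonneg[OF p Q]] by (intro sum_mono) simp
  also have "(\<Sum>n\<in>UNIV. \<Sum>m\<in>UNIV. p$n * Q$n$m) = 1"
    using prob_simplexD(2)[OF p] stoch_matricesD(2)[OF Q] by (simp flip: sum_distrib_left)
  finally show ?thesis using sum_output_dist[OF p Q] by simp
qed

text \<open>A smoothing of the dual variable -p ln(Q/r), which would be optimal if Q and r were positive.\<close>
definition smoothed_dual_var :: "real^'n \<Rightarrow> real^'m^'n \<Rightarrow> real \<Rightarrow> real^'m^'n" where
  "smoothed_dual_var p Q d = (\<chi> n m. - p$n * ln ((Q$n$m + d) / (output_dist p Q $ m + d)))"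

lemma primal_feasible_smoothed_dual_var:
  assumes p: "p \<in> prob_simplex" and Q: "Q \<in> stoch_matrices" and "0 < d"
  shows "primal_feasible p 0 (smoothed_dual_var p Q d)"
proof -
  let ?r = "output_dist p Q" and ?V = "smoothed_dual_var p Q d"
  have "0 < (Q$n$m + d) / (?r$m + d)" for n m
    using stoch_matricesD(1)[OF Q, of n m] output_dist_nonneg[OF p Q, of m] \<open>0 < d\<close> by simp
  then have "(\<Sum>n | 0 < p$n. p$n * exp ((0 - ?V$n$m) / p$n)) = (\<Sum>n | 0 < p$n. p$n * (Q$n$m + d) / (?r$m + d))" for m
    unfolding smoothed_dual_var_def by (intro sum.cong refl) simp
  also have "\<dots> m = (\<Sum>n\<in>UNIV. p$n * (Q$n$m + d) / (?r$m + d))" for m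
    using prob_simplexD(1)[OF p] by (intro sum.mono_neutral_left) (auto simp: order_le_less)
  also have "\<dots> m = 1" for m
    using prob_simplexD(2)[OF p] output_dist_nonneg[OF p Q, of m] \<open>0 < d\<close>
    by (simp add: output_dist_def distrib_left sum.distrib add_nonneg_pos
        flip: sum_divide_distrib sum_distrib_right)
  finally show ?thesis
    using p by (simp add: primal_feasible_iff smoothed_dual_var_def)
qed

lemma ln_divide_sub_le_ln_add_divide:
  fixes x r d :: real
  assumes "0 < x" "0 < r" "0 < d"
  shows "ln (x / r) - d / r \<le> ln ((x + d) / (r + d))"
proof -
  have "ln (r + d) - ln r \<le> d / r"
    using ln_le_minus_one[of "(r + d) / r"] assms by (simp add: ln_div field_simps)
  moreover have "ln x \<le> ln (x + d)" using assms by simp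
  moreover have "ln (x / r) = ln x - ln r" "ln ((x + d) / (r + d)) = ln (x + d) - ln (r + d)"
    using assms by (simp_all add: ln_div)
  ultimately show ?thesis by linarith
qed

lemma mutual_info_le_smoothed_dual_var:
  fixes Q :: "real^'m^'n" and d :: real
  assumes p: "p \<in> prob_simplex" and Q: "Q \<in> stoch_matrices" and "0 < d"
  shows "mutual_info p Q - CARD('m) * d \<le> - (smoothed_dual_var p Q d \<bullet> Q)"
proof -
  let ?r = "output_dist p Q"
  have termwise: "p$n * (xlogx (Q$n$m) - Q$n$m * ln (?r$m)) - p$n * Q$n$m * d / ?r$m
      \<le> p$n * Q$n$m * ln ((Q$n$m + d) / (?r$m + d))" for n m
  proof (cases "p$n * Q$n$m = 0")
    case False
    with prob_simplexD(1)[OF p] stoch_matricesD(1)[OF Q] have "0 < p$n" "0 < Q$n$m"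
      by (auto simp: less_le)
    moreover from this have "0 < ?r$m" using output_dist_ge[OF p Q, of n m] by (smt (verit) mult_pos_pos)
    ultimately have "p$n * Q$n$m * (ln (Q$n$m / ?r$m) - d / ?r$m) \<le> p$n * Q$n$m * ln ((Q$n$m + d) / (?r$m + d))"
      using ln_divide_sub_le_ln_add_divide \<open>0 < d\<close> by (intro mult_left_mono) auto
    with \<open>0 < Q$n$m\<close> \<open>0 < ?r$m\<close> show ?thesis
      by (simp add: xlogx_eq ln_div algebra_simps)
  qed (auto simp: xlogx_def)
  have "(\<Sum>n\<in>UNIV. \<Sum>m\<in>UNIV. p$n * Q$n$m * d / ?r$m) = (\<Sum>m\<in>UNIV. ?r$m * (d / ?r$m))"
    by (subst sum.swap) (simp add: output_dist_def sum_distrib_right sum_divide_distrib)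
  also have "\<dots> \<le> (\<Sum>m\<in>(UNIV::'m set). d)"
    using \<open>0 < d\<close> by (intro sum_mono) (simp add: divide_le_eq_1)
  finally have "(\<Sum>n\<in>UNIV. \<Sum>m\<in>UNIV. p$n * Q$n$m * d / ?r$m) \<le> CARD('m) * d" by simp
  moreover have "mutual_info p Q - (\<Sum>n\<in>UNIV. \<Sum>m\<in>UNIV. p$n * Q$n$m * d / ?r$m)
      \<le> (\<Sum>n\<in>UNIV. \<Sum>m\<in>UNIV. p$n * Q$n$m * ln ((Q$n$m + d) / (?r$m + d)))"
    unfolding mutual_info_eq_sum_kl_div[OF p Q] kl_div_def sum_distrib_left sum_subtractf[symmetric]
    by (intro sum_mono termwise)
  moreover have "- (smoothed_dual_var p Q d \<bullet> Q) = (\<Sum>n\<in>UNIV. \<Sum>m\<in>UNIV. p$n * Q$n$m * ln ((Q$n$m + d) / (?r$m + d)))"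
    by (simp add: smoothed_dual_var_def inner_vec_def algebra_simps flip: sum_negf)
  ultimately show ?thesis by linarith
qed

lemma support_fun_eq_SUP:
  assumes "compact \<Q>" "\<Q> \<noteq> {}"
  shows "support_fun V \<Q> = ereal (SUP Q\<in>\<Q>. V \<bullet> Q)"
proof -
  have "support_fun V \<Q> = (SUP Q\<in>\<Q>. ereal (V \<bullet> Q))"
    by (simp add: support_fun_def inner_vec_def)
  moreover have "\<bar>SUP Q\<in>\<Q>. ereal (V \<bullet> Q)\<bar> \<noteq> \<infinity>"
  proof -
    obtain Q0 where "Q0 \<in> \<Q>" using assms(2) by blast
    then have "ereal (V \<bullet> Q0) \<le> (SUP Q\<in>\<Q>. ereal (V \<bullet> Q))" by (rule SUP_upper)
    moreover have "(SUP Q\<in>\<Q>. ereal (V \<bullet> Q)) \<le> ereal (SUP Q\<in>\<Q>. V \<bullet> Q)"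
      by (intro SUP_least) (simp add: inner_le_SUP[OF assms(1)])
    ultimately show ?thesis by auto
  qed
  ultimately show ?thesis by (simp add: ereal_SUP)
qed

lemma convex_image_primal_feasible:
  fixes p :: "real^'n"
  shows "convex ((\<lambda>(lam, V). (V :: real^'m^'n, (\<Sum>n\<in>UNIV. lam$n) - c)) ` {(lam, V). primal_feasible p lam V})"
proof -
  have "linear (\<lambda>(lam :: real^'n, V :: real^'m^'n). (V, \<Sum>n\<in>UNIV. lam$n))"
    by (rule linearI) (auto simp: sum.distrib sum_distrib_left)
  then have "convex ((+) (0, - c) ` (\<lambda>(lam, V). (V :: real^'m^'n, \<Sum>n\<in>UNIV. lam$n)) ` {(lam, V). primal_feasible p lam V})"
    by (intro convex_translation convex_linear_image convex_primal_feasible)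
  also have "(+) (0, - c) ` (\<lambda>(lam, V). (V :: real^'m^'n, \<Sum>n\<in>UNIV. lam$n)) ` {(lam, V). primal_feasible p lam V}
      = (\<lambda>(lam, V). (V, (\<Sum>n\<in>UNIV. lam$n) - c)) ` {(lam, V). primal_feasible p lam V}"
    by (auto simp: image_image split_beta)
  finally show ?thesis .
qed

lemma exists_channel_mutual_info_le:
  fixes \<Q> :: "(real^'m^'n) set"
  assumes "\<Q> \<noteq> {}" "compact \<Q>" "convex \<Q>" and stoch: "\<Q> \<subseteq> stoch_matrices" and p: "p \<in> prob_simplex"
    and le: "\<And>lam V. primal_feasible p lam V \<Longrightarrow> (\<Sum>n\<in>UNIV. lam$n) - (SUP Q\<in>\<Q>. V \<bullet> Q) \<le> c"
  shows "\<exists>Q\<in>\<Q>. mutual_info p Q \<le> c"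
proof -
  define S where "S = (\<lambda>(lam, V). (V, (\<Sum>n\<in>UNIV. lam$n) - c)) ` {(lam, V :: real^'m^'n). primal_feasible p lam V}"
  have "convex S"
    unfolding S_def by (rule convex_image_primal_feasible)
  obtain Q0 where "Q0 \<in> \<Q>" and Q0: "\<And>lam V. primal_feasible p lam V \<Longrightarrow> (\<Sum>n\<in>UNIV. lam$n) - c \<le> V \<bullet> Q0"
    using support_function_minimax[OF \<open>compact \<Q>\<close> \<open>convex \<Q>\<close> \<open>\<Q> \<noteq> {}\<close> \<open>convex S\<close>] le
    unfolding S_def by force
  have "mutual_info p Q0 \<le> c"
  proof (rule field_le_epsilon)
    fix e :: real assume "0 < e"
    have "Q0 \<in> stoch_matrices" "0 < e / CARD('m)" using \<open>Q0 \<in> \<Q>\<close> stoch \<open>0 < e\<close> by auto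
    note smoothed = primal_feasible_smoothed_dual_var[OF p this] mutual_info_le_smoothed_dual_var[OF p this]
    from Q0[OF smoothed(1)] smoothed(2) show "mutual_info p Q0 \<le> c + e" by simp
  qed
  with \<open>Q0 \<in> \<Q>\<close> show ?thesis by blast
qed

lemma robust_capacity_le_dual_value:
  fixes \<Q> :: "(real^'m^'n) set"
  assumes "\<Q> \<subseteq> stoch_matrices"
  shows "robust_capacity \<Q> \<le> dual_value \<Q>"
  unfolding robust_capacity_def dual_value_def
proof (intro SUP_least INF_greatest, clarify)
  fix p :: "real^'n" and v and Q assume "p \<in> prob_simplex" "Q \<in> \<Q>"
  then have "(INF Q\<in>\<Q>. ereal (mutual_info p Q)) \<le> ereal (mutual_info p Q)"
    by (intro INF_lower)
  also have "\<dots> \<le> ereal (dual_obj v Q)"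
    using mutual_info_le_dual_obj \<open>p \<in> prob_simplex\<close> \<open>Q \<in> \<Q>\<close> assms by auto
  finally show "(INF Q\<in>\<Q>. ereal (mutual_info p Q)) \<le> ereal (dual_obj v Q)" .
qed

lemma primal_value_le_robust_capacity:
  fixes \<Q> :: "(real^'m^'n) set"
  assumes "\<Q> \<noteq> {}" "compact \<Q>" "\<Q> \<subseteq> stoch_matrices"
  shows "primal_value \<Q> \<le> robust_capacity \<Q>"
  unfolding primal_value_def
proof (intro SUP_least, clarify)
  fix p lam :: "real^'n" and V :: "real^'m^'n"
  assume feasible: "primal_feasible p lam V"
  then have "p \<in> prob_simplex" by (simp add: primal_feasible_iff)
  have "ereal (\<Sum>n\<in>UNIV. lam$n) - support_fun V \<Q> = ereal ((\<Sum>n\<in>UNIV. lam$n) - (SUP Q\<in>\<Q>. V \<bullet> Q))"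
    using support_fun_eq_SUP[OF \<open>compact \<Q>\<close> \<open>\<Q> \<noteq> {}\<close>] by simp
  also have "\<dots> \<le> (INF Q\<in>\<Q>. ereal (mutual_info p Q))"
  proof (rule INF_greatest)
    fix Q assume "Q \<in> \<Q>"
    then have "(\<Sum>n\<in>UNIV. lam$n) - (SUP Q\<in>\<Q>. V \<bullet> Q) \<le> (\<Sum>n\<in>UNIV. lam$n) - V \<bullet> Q"
      using inner_le_SUP[OF \<open>compact \<Q>\<close>] by simp
    also have "\<dots> \<le> mutual_info p Q"
      using primal_feasible_le_mutual_info[OF feasible] \<open>Q \<in> \<Q>\<close> assms(3) by blast
    finally show "ereal ((\<Sum>n\<in>UNIV. lam$n) - (SUP Q\<in>\<Q>. V \<bullet> Q)) \<le> ereal (mutual_info p Q)"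
      by simp
  qed
  also have "\<dots> \<le> robust_capacity \<Q>"
    unfolding robust_capacity_def using \<open>p \<in> prob_simplex\<close> by (rule SUP_upper)
  finally show "ereal (\<Sum>n\<in>UNIV. lam$n) - support_fun V \<Q> \<le> robust_capacity \<Q>" .
qed

lemma dual_value_le_primal_value:
  fixes \<Q> :: "(real^'m^'n) set"
  assumes "\<Q> \<noteq> {}" "compact \<Q>" "convex \<Q>" "\<Q> \<subseteq> stoch_matrices"
  shows "dual_value \<Q> \<le> primal_value \<Q>"
proof (rule dense_le)
  fix y assume "y < dual_value \<Q>"
  show "y \<le> primal_value \<Q>"
  proof (cases y)
    case (real c)
    have "c \<le> dual_obj v Q" if "Q \<in> \<Q>" for v Q
    proof -
      have "dual_value \<Q> \<le> ereal (dual_obj v Q)"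
        unfolding dual_value_def
        using INF_lower[of "(v, Q)" "UNIV \<times> \<Q>" "\<lambda>(v, Q). ereal (dual_obj v Q)"] that by simp
      with \<open>y < dual_value \<Q>\<close> have "y < ereal (dual_obj v Q)" by (rule less_le_trans)
      then show ?thesis unfolding real by simp
    qed
    then obtain p where "p \<in> prob_simplex" and p: "\<And>Q. Q \<in> \<Q> \<Longrightarrow> c \<le> mutual_info p Q"
      using exists_input_mutual_info_ge[OF \<open>convex \<Q>\<close> \<open>\<Q> \<subseteq> stoch_matrices\<close>] by blast
    show ?thesis unfolding real
    proof (rule ereal_le_real)
      fix z assume z: "primal_value \<Q> \<le> ereal z"
      have "(\<Sum>n\<in>UNIV. lam$n) - (SUP Q\<in>\<Q>. V \<bullet> Q) \<le> z" if "primal_feasible p lam V" for lam V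
      proof -
        have "ereal (\<Sum>n\<in>UNIV. lam$n) - support_fun V \<Q> \<le> primal_value \<Q>"
          unfolding primal_value_def using that by (intro SUP_upper2[of "(p, lam, V)"]) auto
        then have "ereal (\<Sum>n\<in>UNIV. lam$n) - support_fun V \<Q> \<le> ereal z"
          using z by (rule order_trans)
        then show ?thesis by (simp add: support_fun_eq_SUP[OF \<open>compact \<Q>\<close> \<open>\<Q> \<noteq> {}\<close>])
      qed
      then obtain Q where "Q \<in> \<Q>" "mutual_info p Q \<le> z"
        using exists_channel_mutual_info_le[OF assms \<open>p \<in> prob_simplex\<close>] by blast
      with p show "ereal c \<le> ereal z" by fastforce
    qed
  qed (use \<open>y < dual_value \<Q>\<close> in auto)
qed

theorem proposition2:
  fixes \<Q> :: "(real^'m^'n) set"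
  assumes "\<Q> \<noteq> {}" and "compact \<Q>" and "convex \<Q>" and "\<Q> \<subseteq> stoch_matrices"
  shows "primal_value \<Q> = dual_value \<Q> \<and> robust_capacity \<Q> = dual_value \<Q>"
proof -
  have "primal_value \<Q> \<le> robust_capacity \<Q>"
    using primal_value_le_robust_capacity assms by blast
  moreover have "robust_capacity \<Q> \<le> dual_value \<Q>"
    using robust_capacity_le_dual_value assms by blast
  moreover have "dual_value \<Q> \<le> primal_value \<Q>"
    using dual_value_le_primal_value assms by blast
  ultimately show ?thesis by (meson order_antisym order_trans)
qed

end
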